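(* Let $(X_i)$ be iid with $\mathbb E[X_1]=0$, $\operatorname{Var}(X_1)=1$, $S_n=X_1+\dots+X_n$, and suppose there is $\gamma_n\to\infty$ with $\sup_{0\le x<\gamma_n}|\mathbb P(S_n/\sqrt n>x)/\overline\Phi(x)-1|\to0$. Let $k=k_n\to\infty$, $p=p_n\to\infty$ be integers with $p_n/k_n\to\infty$ and $p/k<\exp(\gamma_n^2/2)$. Let $m=[p/k]$ and $$N_p=\frac1k\sum_{i=1}^p\varepsilon_{d_m(S_{ni}/\sqrt n-d_m)}.$$ Then for every $x\in\mathbb R$, $\mathbb E[N_p(x,\infty)]\to e^{-x}$ and $\operatorname{Var}(N_p(x,\infty))\to0$; consequently $N_p(x,\infty)\xrightarrow{\mathbb P}e^{-x}$ for every $x\in\mathbb R$.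
   Context: $\overline\Phi=1-\Phi$ with $\Phi$ the standard normal distribution function. For $m\ge2$, $d_m=\sqrt{2\log m}-\frac{\log\log m+\log 4\pi}{2(2\log m)^{1/2}}$. For each $n$, $(S_{ni})_{i\ge1}$ are iid copies of $S_n$; $\varepsilon_x$ is Dirac measure at $x$. *)

theory Defs
  imports "HOL-Probability.Probability"
begin

definition Phi :: "real \<Rightarrow> real" where
  "Phi x = (LBINT t:{..x}. std_normal_density t)"

definition Phi_bar :: "real \<Rightarrow> real" where
  "Phi_bar x = 1 - Phi x"

text \<open>Normalising constants d_m (meaningful for m >= 2).\<close>
definition d_const :: "nat \<Rightarrow> real" where
  "d_const m = sqrt (2 * ln (real m))
     - (ln (ln (real m)) + ln (4 * pi)) / (2 * sqrt (2 * ln (real m)))"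

text \<open>N_p(x,infinity) evaluated at omega: (1/k) times the number of i in 1..p
  (indexed here by i < p) with d_m (S_ni / sqrt n - d_m) > x.\<close>
definition N_tail :: "nat \<Rightarrow> nat \<Rightarrow> nat \<Rightarrow> (nat \<Rightarrow> 'b \<Rightarrow> real) \<Rightarrow> real \<Rightarrow> 'b \<Rightarrow> real" where
  "N_tail n k p Y x \<omega> =
     (let m = p div k in
      real (card {i. i < p \<and> d_const m * (Y i \<omega> / sqrt (real n) - d_const m) > x}) / real k)"

end

theory Submission
  imports Defs "HOL-Real_Asymp.Real_Asymp"
begin

text \<open>The \<open>p\<close> points of \<open>N\<^sub>p\<close> fall into \<open>(x,\<infinity>)\<close> independently, each with probability
  \<open>q = P(S\<^sub>n/\<surd>n > u)\<close> where \<open>u = d\<^sub>m + x/d\<^sub>m\<close>; so \<open>k N\<^sub>p(x,\<infinity>)\<close> is binomial, with mean \<open>pq/k\<close>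
  and variance \<open>pq(1 - q)/k\<^sup>2 \<le> (pq/k)/k\<close> for \<open>N\<^sub>p(x,\<infinity>)\<close>. Because \<open>m \<le> p/k < exp(\<gamma>\<^sub>n\<^sup>2/2)\<close> and
  eventually \<open>u < \<surd>(2 log m)\<close>, the point \<open>u\<close> lies in the range \<open>[0,\<gamma>\<^sub>n)\<close> of the moderate deviation
  hypothesis, so \<open>q / Phi_bar u \<rightarrow> 1\<close>. The Mills-ratio bounds
  \<open>\<phi>(u)(1/u - 1/u\<^sup>3) \<le> Phi_bar u \<le> \<phi>(u)/u\<close> together with the choice of \<open>d\<^sub>m\<close> give
  \<open>m Phi_bar u \<rightarrow> exp(-x)\<close>, and \<open>m / (p/k) \<rightarrow> 1\<close>; hence the mean tends to \<open>exp(-x)\<close>, the variance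
  to \<open>0\<close>, and Chebyshev's inequality gives convergence in probability.\<close>

lemma set_integrable_std_normal_density:
  "A \<in> sets borel \<Longrightarrow> set_integrable lborel A std_normal_density"
  unfolding set_integrable_def by (intro integrable_mult_indicator) auto

lemma Phi_bar_eq_set_integral: "Phi_bar t = (LINT s:{t<..}|lborel. std_normal_density s)"
proof -
  have "{..t} \<union> {t<..} = UNIV" "{..t} \<inter> {t<..} = {}"
    by auto
  then have "(LINT s:UNIV|lborel. std_normal_density s)
      = (LINT s:{..t}|lborel. std_normal_density s) + (LINT s:{t<..}|lborel. std_normal_density s)"
    using set_integral_Un[of "{..t}" "{t<..}" lborel std_normal_density]
    by (simp add: set_integrable_std_normal_density)
  moreover have "(LINT s:UNIV|lborel. std_normal_density s) = 1"
    by (simp add: set_lebesgue_integral_def)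
  ultimately show ?thesis
    unfolding Phi_bar_def Phi_def by linarith
qed

text \<open>The Mills-ratio bounds below come from the antiderivatives \<open>-\<phi>(s)/t\<close> and
  \<open>-\<phi>(s)(1/s - 1/s\<^sup>3)\<close> of integrands that dominate, resp. are dominated by, \<open>\<phi>\<close> on \<open>(t,\<infinity>)\<close>.\<close>

lemma Phi_bar_upper_bound:
  assumes t: "t > 0"
  shows "Phi_bar t \<le> std_normal_density t / t"
proof -
  let ?F = "\<lambda>s. - std_normal_density s / t"
  let ?f = "\<lambda>s. s * std_normal_density s / t"
  have deriv: "DERIV ?F s :> ?f s" for s
    unfolding std_normal_density_def using t
    by (auto intro!: derivative_eq_intros simp: field_simps)
  have "isCont ?F t"
    unfolding std_normal_density_def using t by (intro continuous_intros) auto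
  then have "((?F \<circ> real_of_ereal) \<longlongrightarrow> ?F t) (at_right (ereal t))"
    unfolding ereal_tendsto_simps1 isCont_def by (rule tendsto_within_subset) simp
  moreover have "((\<lambda>s::real. exp (- s\<^sup>2 / 2)) \<longlongrightarrow> 0) at_top"
    by real_asymp
  then have "((?F \<circ> real_of_ereal) \<longlongrightarrow> 0) (at_left \<infinity>)"
    unfolding ereal_tendsto_simps1 std_normal_density_def
    using tendsto_mult_right_zero[of _ at_top "- (1 / sqrt (2 * pi)) / t"] by simp
  ultimately have FTC: "set_integrable lborel (einterval t \<infinity>) ?f"
      "(LBINT s=ereal t..\<infinity>. ?f s) = 0 - ?F t"
    using interval_integral_FTC_nonneg[of t \<infinity> ?F ?f] deriv t
    by (auto simp: std_normal_density_def intro!: continuous_intros)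
  have "Phi_bar t = (LINT s:{t<..}|lborel. std_normal_density s)"
    by (rule Phi_bar_eq_set_integral)
  also have "\<dots> \<le> (LINT s:{t<..}|lborel. ?f s)"
  proof (intro set_integral_mono set_integrable_std_normal_density)
    show "set_integrable lborel {t<..} ?f"
      using FTC(1) by simp
    show "std_normal_density s \<le> ?f s" if "s \<in> {t<..}" for s
      using mult_right_mono[of 1 "s / t" "std_normal_density s"] that t by simp
  qed simp
  also have "\<dots> = std_normal_density t / t"
    using FTC(2) by (simp add: interval_lebesgue_integral_def)
  finally show ?thesis .
qed

lemma Phi_bar_lower_bound:
  assumes t: "t \<ge> 2"
  shows "std_normal_density t * (1 / t - 1 / t ^ 3) \<le> Phi_bar t"
proof -
  define c :: real where "c = 1 / sqrt (2 * pi)"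
  have c: "c > 0" and density: "std_normal_density s = c * exp (- s\<^sup>2 / 2)" for s
    unfolding c_def std_normal_density_def by simp_all
  let ?G = "\<lambda>s::real. - exp (- s\<^sup>2 / 2) * (1 / s - 1 / s ^ 3)"
  let ?F = "\<lambda>s. c * ?G s"
  let ?f = "\<lambda>s. c * (exp (- s\<^sup>2 / 2) * (1 - 3 / s ^ 4))"
  have "DERIV ?G s :> exp (- s\<^sup>2 / 2) * (1 - 3 / s ^ 4)" if "s \<noteq> 0" for s
    using that by (auto intro!: derivative_eq_intros simp: field_simps eval_nat_numeral)
  then have deriv: "DERIV ?F s :> ?f s" if "s \<noteq> 0" for s
    using that by (intro DERIV_cmult)
  have f_nonneg: "0 \<le> ?f s" if "s \<ge> 2" for s
  proof -
    have "(2::real) ^ 4 \<le> s ^ 4"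
      using that by (intro power_mono) auto
    then have "3 / s ^ 4 \<le> 1"
      by (simp add: divide_le_eq)
    then show ?thesis
      using c by simp
  qed
  have "isCont ?F t"
    using t by (intro continuous_intros) auto
  then have "((?F \<circ> real_of_ereal) \<longlongrightarrow> ?F t) (at_right (ereal t))"
    unfolding ereal_tendsto_simps1 isCont_def by (rule tendsto_within_subset) simp
  moreover have "(?G \<longlongrightarrow> 0) at_top"
    by real_asymp
  then have "(?F \<longlongrightarrow> 0) at_top"
    by (rule tendsto_mult_right_zero)
  then have "((?F \<circ> real_of_ereal) \<longlongrightarrow> 0) (at_left \<infinity>)"
    unfolding ereal_tendsto_simps1 by simp
  moreover have "isCont ?f s" if "s \<noteq> 0" for s
    using that by (intro continuous_intros) auto
  ultimately have FTC: "set_integrable lborel (einterval t \<infinity>) ?f"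
      "(LBINT s=ereal t..\<infinity>. ?f s) = 0 - ?F t"
    using interval_integral_FTC_nonneg[of t \<infinity> ?F ?f] deriv f_nonneg t
    by (auto intro!: AE_I2)
  have "std_normal_density t * (1 / t - 1 / t ^ 3) = 0 - ?F t"
    by (simp add: density)
  also have "\<dots> = (LINT s:{t<..}|lborel. ?f s)"
    using FTC(2)[symmetric] by (simp add: interval_lebesgue_integral_def)
  also have "\<dots> \<le> (LINT s:{t<..}|lborel. std_normal_density s)"
  proof (intro set_integral_mono set_integrable_std_normal_density)
    show "set_integrable lborel {t<..} ?f"
      using FTC(1) by simp
    show "?f s \<le> std_normal_density s" for s
      using c by (simp add: density mult_le_cancel_left1)
  qed simp
  also have "\<dots> = Phi_bar t"
    by (rule Phi_bar_eq_set_integral[symmetric])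
  finally show ?thesis .
qed

lemma Phi_bar_pos:
  assumes t: "t \<ge> 2"
  shows "Phi_bar t > 0"
proof -
  have "2 * 2 \<le> t * t"
    using t by (intro mult_mono) auto
  then have "1 / t ^ 3 < 1 / t"
    using t by (simp add: power3_eq_cube divide_simps)
  then have "0 < std_normal_density t * (1 / t - 1 / t ^ 3)"
    by (simp add: normal_density_pos)
  also have "\<dots> \<le> Phi_bar t"
    by (rule Phi_bar_lower_bound[OF t])
  finally show ?thesis .
qed

definition d_const_real :: "real \<Rightarrow> real" where
  "d_const_real r = sqrt (2 * ln r) - (ln (ln r) + ln (4 * pi)) / (2 * sqrt (2 * ln r))"

lemma d_const_eq: "d_const m = d_const_real (real m)"
  by (simp add: d_const_def d_const_real_def)

lemma eventually_d_const_real_pos: "\<forall>\<^sub>F r in at_top. d_const_real r > 0"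
  unfolding d_const_real_def by real_asymp

text \<open>The exact identity behind the choice of \<open>d\<^sub>m\<close>, which makes \<open>m \<phi>(d\<^sub>m) / d\<^sub>m \<rightarrow> 1\<close>.\<close>

lemma mult_exp_neg_d_const_real_sq:
  assumes r: "r > 1"
  shows "r * exp (- (d_const_real r)\<^sup>2 / 2)
       = sqrt (4 * pi * ln r) * exp (- ((ln (ln r) + ln (4 * pi))\<^sup>2 / (16 * ln r)))"
proof -
  define L c where "L = ln r" and "c = ln (ln r) + ln (4 * pi)"
  have L: "L > 0"
    using r by (simp add: L_def)
  have c: "c = ln (4 * pi * L)"
    using L by (simp add: c_def L_def ln_mult)
  have "(d_const_real r)\<^sup>2 = (sqrt (2 * L))\<^sup>2 - c + c\<^sup>2 / (4 * (sqrt (2 * L))\<^sup>2)"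
    unfolding d_const_real_def c_def[symmetric] unfolding L_def[symmetric] using L
    by (simp add: power2_eq_square field_simps)
  then have "- (d_const_real r)\<^sup>2 / 2 = - L + c / 2 + - (c\<^sup>2 / (16 * L))"
    using L by (simp add: field_simps)
  then have "exp (- (d_const_real r)\<^sup>2 / 2) = exp (- L) * exp (c / 2) * exp (- (c\<^sup>2 / (16 * L)))"
    by (simp only: exp_add)
  also have "exp (- L) = 1 / r"
    using r by (simp add: L_def exp_minus inverse_eq_divide)
  also have "exp (c / 2) = sqrt (4 * pi * L)"
    using L by (simp add: c powr_def powr_half_sqrt[symmetric])
  finally show ?thesis
    using r by (simp add: L_def c_def)
qed

lemma std_normal_density_shift:
  assumes "d \<noteq> 0"
  shows "std_normal_density (d + x / d) = std_normal_density d * exp (- x) * exp (- (x\<^sup>2 / (2 * d\<^sup>2)))"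
proof -
  have "- (d + x / d)\<^sup>2 / 2 = - d\<^sup>2 / 2 + - x + - (x\<^sup>2 / (2 * d\<^sup>2))"
    using assms by (simp add: power2_eq_square field_simps)
  then show ?thesis
    unfolding std_normal_density_def by (simp only: exp_add)
qed

lemma tendsto_mult_std_normal_density_shift:
  "((\<lambda>r. r * std_normal_density (d_const_real r + x / d_const_real r) / (d_const_real r + x / d_const_real r))
      \<longlongrightarrow> exp (- x)) at_top"
proof -
  define u where "u r = d_const_real r + x / d_const_real r" for r
  define h where "h r = sqrt (2 * ln r) / u r * exp (- ((ln (ln r) + ln (4 * pi))\<^sup>2 / (16 * ln r)))
      * exp (- (x\<^sup>2 / (2 * (d_const_real r)\<^sup>2)))" for r
  have "(h \<longlongrightarrow> 1) at_top"
    unfolding h_def u_def d_const_real_def by real_asymp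
  then have "((\<lambda>r. h r * exp (- x)) \<longlongrightarrow> exp (- x)) at_top"
    using tendsto_mult_right[of h 1 at_top "exp (- x)"] by simp
  moreover have "\<forall>\<^sub>F r in at_top. h r * exp (- x) = r * std_normal_density (u r) / u r"
    using eventually_gt_at_top[of 1] eventually_d_const_real_pos
  proof eventually_elim
    case (elim r)
    have "sqrt (4 * pi * ln r) = sqrt (2 * pi) * sqrt (2 * ln r)"
      by (simp flip: real_sqrt_mult)
    then have "r * std_normal_density (d_const_real r)
        = sqrt (2 * ln r) * exp (- ((ln (ln r) + ln (4 * pi))\<^sup>2 / (16 * ln r)))"
      using mult_exp_neg_d_const_real_sq[OF elim(1)] by (simp add: std_normal_density_def)
    then show ?case
      using elim unfolding u_def h_def by (simp add: std_normal_density_shift)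
  qed
  ultimately show ?thesis
    unfolding u_def by (rule Lim_transform_eventually)
qed

lemma tendsto_mult_Phi_bar_shift:
  "((\<lambda>r. r * Phi_bar (d_const_real r + x / d_const_real r)) \<longlongrightarrow> exp (- x)) at_top"
proof -
  define u where "u r = d_const_real r + x / d_const_real r" for r
  define g where "g r = r * std_normal_density (u r) / u r" for r
  have g: "(g \<longlongrightarrow> exp (- x)) at_top"
    unfolding g_def u_def by (rule tendsto_mult_std_normal_density_shift)
  have "((\<lambda>r. 1 - 1 / (u r)\<^sup>2) \<longlongrightarrow> 1) at_top"
    unfolding u_def d_const_real_def by real_asymp
  from tendsto_mult[OF g this] have g_lower: "((\<lambda>r. g r * (1 - 1 / (u r)\<^sup>2)) \<longlongrightarrow> exp (- x)) at_top"
    by simp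
  have "\<forall>\<^sub>F r in at_top. 2 \<le> u r"
    unfolding u_def d_const_real_def by real_asymp
  then have bounds: "\<forall>\<^sub>F r in at_top. g r * (1 - 1 / (u r)\<^sup>2) \<le> r * Phi_bar (u r) \<and> r * Phi_bar (u r) \<le> g r"
    using eventually_gt_at_top[of 0]
  proof eventually_elim
    case (elim r)
    have "g r * (1 - 1 / (u r)\<^sup>2) = r * (std_normal_density (u r) * (1 / u r - 1 / u r ^ 3))"
      using elim unfolding g_def by (simp add: field_simps power2_eq_square power3_eq_cube)
    also have "\<dots> \<le> r * Phi_bar (u r)"
      using Phi_bar_lower_bound[of "u r"] elim by (intro mult_left_mono) auto
    moreover have "r * Phi_bar (u r) \<le> r * (std_normal_density (u r) / u r)"
      using Phi_bar_upper_bound[of "u r"] elim by (intro mult_left_mono) auto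
    ultimately show ?case
      unfolding g_def by simp
  qed
  show ?thesis
    using tendsto_sandwich[OF _ _ g_lower g] bounds unfolding u_def by (simp add: eventually_conj_iff)
qed

lemma eventually_d_const_real_shift_bounds:
  "\<forall>\<^sub>F r in at_top. 2 \<le> d_const_real r + x / d_const_real r
      \<and> (\<forall>g\<ge>0. r < exp (g\<^sup>2 / 2) \<longrightarrow> d_const_real r + x / d_const_real r < g)"
proof -
  have "\<forall>\<^sub>F r in at_top. 2 \<le> d_const_real r + x / d_const_real r"
    "\<forall>\<^sub>F r in at_top. d_const_real r + x / d_const_real r < sqrt (2 * ln r)"
    unfolding d_const_real_def by real_asymp+
  then show ?thesis
    using eventually_gt_at_top[of 0]
  proof eventually_elim
    case (elim r)
    have "sqrt (2 * ln r) < g" if "g \<ge> 0" "r < exp (g\<^sup>2 / 2)" for g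
    proof -
      have "ln r < g\<^sup>2 / 2"
        using that elim(3) by (metis exp_gt_zero ln_exp ln_less_cancel_iff)
      then have "sqrt (2 * ln r) < sqrt (g\<^sup>2)"
        by (intro real_sqrt_less_mono) simp
      then show ?thesis
        using that by simp
    qed
    then show ?case
      using elim(1,2) by force
  qed
qed

lemma filterlim_real_nat_div:
  assumes "filterlim (\<lambda>n. real (p n) / real (k n)) at_top F"
  shows "filterlim (\<lambda>n. real (p n div k n)) at_top F"
proof -
  have "filterlim (\<lambda>y::real. real_of_int \<lfloor>y\<rfloor>) at_top at_top"
    by real_asymp
  from filterlim_compose[OF this assms] show ?thesis
    by (simp add: floor_divide_of_nat_eq)
qed

lemma tendsto_ratio_real_nat_div:
  assumes "filterlim (\<lambda>n. real (p n) / real (k n)) at_top F"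
  shows "((\<lambda>n. real (p n) / real (k n) / real (p n div k n)) \<longlongrightarrow> 1) F"
proof -
  have "((\<lambda>y::real. y / real_of_int \<lfloor>y\<rfloor>) \<longlongrightarrow> 1) at_top"
    by real_asymp
  from filterlim_compose[OF this assms] show ?thesis
    by (simp add: floor_divide_of_nat_eq)
qed

lemma (in prob_space) indicator_sum_moments:
  fixes A :: "nat \<Rightarrow> 'a set" and p :: nat and c q :: real
  assumes A: "\<And>i. A i \<in> events" and prob_A: "\<And>i. prob (A i) = q"
    and prob_Int: "\<And>i j. i \<noteq> j \<Longrightarrow> prob (A i \<inter> A j) = q * q"
  defines "C \<equiv> \<lambda>\<omega>. (\<Sum>i<p. indicator (A i) \<omega>) / c"
  shows "expectation C = real p * q / c"
    and "variance C = real p * q * (1 - q) / c\<^sup>2"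
    and "integrable M C"
    and "integrable M (\<lambda>\<omega>. (C \<omega>)\<^sup>2)"
proof -
  have [simp]: "A i \<inter> space M = A i" "A i \<inter> A j \<inter> space M = A i \<inter> A j" for i j
    using sets.sets_into_space[OF A] by auto
  have [simp]: "integrable M (indicator (A i) :: 'a \<Rightarrow> real)"
    "integrable M (indicator (A i \<inter> A j) :: 'a \<Rightarrow> real)" for i j
    using A by (auto intro!: integrable_real_indicator simp: less_top[symmetric])
  have C_sq: "(C \<omega>)\<^sup>2 = (\<Sum>i<p. \<Sum>j<p. indicator (A i \<inter> A j) \<omega>) / c\<^sup>2" for \<omega>
    by (simp add: C_def power2_eq_square sum_product indicator_inter_arith power_divide)
  have row_sum: "(\<Sum>j<p. prob (A i \<inter> A j)) = q + (real p - 1) * (q * q)" if "i < p" for i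
  proof -
    have "(\<Sum>j<p. prob (A i \<inter> A j)) = prob (A i) + (\<Sum>j\<in>{..<p} - {i}. prob (A i \<inter> A j))"
      using that by (subst sum.remove[of _ i]) auto
    also have "\<dots> = q + (real p - 1) * (q * q)"
      using that by (simp add: prob_A prob_Int of_nat_diff)
    finally show ?thesis .
  qed
  show E: "expectation C = real p * q / c"
    unfolding C_def by (simp add: prob_A)
  have E_sq: "expectation (\<lambda>\<omega>. (C \<omega>)\<^sup>2) = real p * (q + (real p - 1) * (q * q)) / c\<^sup>2"
    unfolding C_sq by (simp add: row_sum)
  show int: "integrable M C" "integrable M (\<lambda>\<omega>. (C \<omega>)\<^sup>2)"
    unfolding C_sq by (simp_all add: C_def)
  have "variance C = expectation (\<lambda>\<omega>. (C \<omega>)\<^sup>2) - (expectation C)\<^sup>2"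
    using int by (rule variance_eq)
  also have "\<dots> = real p * q * (1 - q) / c\<^sup>2"
    unfolding E E_sq power_divide diff_divide_distrib[symmetric] by (simp add: algebra_simps power2_eq_square)
  finally show "variance C = real p * q * (1 - q) / c\<^sup>2" .
qed

lemma (in prob_space) binomial_count_moments:
  fixes Y :: "nat \<Rightarrow> 'a \<Rightarrow> real" and B :: "real set" and p :: nat and c q :: real
  assumes indep: "indep_vars (\<lambda>_. borel) Y UNIV" and B: "B \<in> sets borel"
    and prob_B: "\<And>i. prob (Y i -` B \<inter> space M) = q"
  defines "C \<equiv> \<lambda>\<omega>. real (card {i. i < p \<and> Y i \<omega> \<in> B}) / c"
  shows "expectation C = real p * q / c"
    and "variance C = real p * q * (1 - q) / c\<^sup>2"
    and "C \<in> borel_measurable M"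
    and "integrable M (\<lambda>\<omega>. (C \<omega>)\<^sup>2)"
proof -
  define A where "A i = Y i -` B \<inter> space M" for i
  have "Y i \<in> borel_measurable M" for i
    using indep by (auto simp: indep_vars_def)
  then have A: "A i \<in> events" for i
    unfolding A_def using B by (rule measurable_sets)
  have prob_A: "prob (A i) = q" for i
    by (simp add: A_def prob_B)
  have prob_Int: "prob (A i \<inter> A j) = q * q" if "i \<noteq> j" for i j
  proof -
    have "prob (\<Inter>l\<in>{i, j}. A l) = (\<Prod>l\<in>{i, j}. prob (A l))"
      unfolding A_def using B by (intro indep_varsD[OF indep]) auto
    then show ?thesis
      using that by (simp add: prob_A)
  qed
  note moments = indicator_sum_moments[where A = A and p = p and c = c, OF A prob_A prob_Int]
  have C_eq: "C \<omega> = (\<Sum>i<p. indicator (A i) \<omega>) / c" if "\<omega> \<in> space M" for \<omega>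
  proof -
    have "{i. i < p \<and> Y i \<omega> \<in> B} = {i \<in> {..<p}. \<omega> \<in> A i}"
      using that by (auto simp: A_def)
    then show ?thesis
      by (simp add: C_def indicator_def sum.If_cases Int_def)
  qed
  have "(\<lambda>\<omega>. (\<Sum>i<p. indicator (A i) \<omega>) / c) \<in> borel_measurable M"
    using moments(3) by (rule borel_measurable_integrable)
  then show "C \<in> borel_measurable M" "integrable M (\<lambda>\<omega>. (C \<omega>)\<^sup>2)"
    using moments(4) by (auto simp: C_eq cong: measurable_cong Bochner_Integration.integrable_cong)
  show "expectation C = real p * q / c" "variance C = real p * q * (1 - q) / c\<^sup>2"
    using moments(1,2) by (simp_all add: C_eq cong: Bochner_Integration.integral_cong)
qed

lemma N_tail_moments:
  fixes N :: "'b measure" and M :: "'a measure" and Y :: "nat \<Rightarrow> 'b \<Rightarrow> real" and S :: "'a \<Rightarrow> real"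
    and n k p :: nat and x :: real
  assumes N: "prob_space N" and indep: "prob_space.indep_vars N (\<lambda>_. borel) Y UNIV"
    and Y_distr: "\<And>i. distr N borel (Y i) = distr M borel S" and S: "S \<in> borel_measurable M"
    and d_pos: "d_const (p div k) > 0"
  defines "q \<equiv> measure M {\<omega> \<in> space M.
      d_const (p div k) + x / d_const (p div k) < S \<omega> / sqrt (real n)}"
  shows "prob_space.expectation N (N_tail n k p Y x) = real p * q / real k"
    and "prob_space.variance N (N_tail n k p Y x) = real p * q * (1 - q) / (real k)\<^sup>2"
    and "N_tail n k p Y x \<in> borel_measurable N"
    and "integrable N (\<lambda>\<omega>. (N_tail n k p Y x \<omega>)\<^sup>2)"
proof -
  interpret N: prob_space N
    by (rule N)
  define d where "d = d_const (p div k)"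
  define B where "B = {t. d + x / d < t / sqrt (real n)}"
  have B: "B \<in> sets borel"
    unfolding B_def by measurable
  have "x < d * (t / sqrt (real n) - d) \<longleftrightarrow> t \<in> B" for t
  proof -
    have "x / d < t / sqrt (real n) - d \<longleftrightarrow> x < (t / sqrt (real n) - d) * d"
      using d_pos by (simp add: d_def pos_divide_less_eq)
    then show ?thesis
      by (auto simp: B_def mult.commute less_diff_eq add.commute)
  qed
  then have N_tail_eq: "N_tail n k p Y x = (\<lambda>\<omega>. real (card {i. i < p \<and> Y i \<omega> \<in> B}) / real k)"
    by (simp add: N_tail_def Let_def d_def fun_eq_iff)
  have "Y i \<in> borel_measurable N" for i
    using indep by (auto simp: N.indep_vars_def)
  then have "N.prob (Y i -` B \<inter> space N) = measure M (S -` B \<inter> space M)" for i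
    using Y_distr[of i] B S by (metis measure_distr)
  also have "S -` B \<inter> space M = {\<omega> \<in> space M. d + x / d < S \<omega> / sqrt (real n)}"
    by (auto simp: B_def)
  finally have "N.prob (Y i -` B \<inter> space N) = q" for i
    by (simp add: q_def d_def)
  note moments = N.binomial_count_moments[OF indep B this, of p "real k"]
  show "N.expectation (N_tail n k p Y x) = real p * q / real k"
    "N.variance (N_tail n k p Y x) = real p * q * (1 - q) / (real k)\<^sup>2"
    "N_tail n k p Y x \<in> borel_measurable N"
    "integrable N (\<lambda>\<omega>. (N_tail n k p Y x \<omega>)\<^sup>2)"
    unfolding N_tail_eq by (fact moments)+
qed

lemma tendsto_prob_deviation_0:
  fixes M :: "'n \<Rightarrow> 'a measure" and f :: "'n \<Rightarrow> 'a \<Rightarrow> real"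
  assumes M: "\<And>n. prob_space (M n)"
    and f: "\<forall>\<^sub>F n in F. f n \<in> borel_measurable (M n) \<and> integrable (M n) (\<lambda>\<omega>. (f n \<omega>)\<^sup>2)"
    and mean: "((\<lambda>n. prob_space.expectation (M n) (f n)) \<longlongrightarrow> c) F"
    and var: "((\<lambda>n. prob_space.variance (M n) (f n)) \<longlongrightarrow> 0) F"
    and e: "e > 0"
  shows "((\<lambda>n. prob_space.prob (M n) {\<omega> \<in> space (M n). \<bar>f n \<omega> - c\<bar> > e}) \<longlongrightarrow> 0) F"
proof (rule tendsto_sandwich[OF _ _ tendsto_const])
  show "((\<lambda>n. prob_space.variance (M n) (f n) / (e / 2)\<^sup>2) \<longlongrightarrow> 0) F"
    using tendsto_divide[OF var tendsto_const[of "(e / 2)\<^sup>2"]] e by simp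
  show "\<forall>\<^sub>F n in F. 0 \<le> prob_space.prob (M n) {\<omega> \<in> space (M n). \<bar>f n \<omega> - c\<bar> > e}"
    by simp
  have "\<forall>\<^sub>F n in F. \<bar>prob_space.expectation (M n) (f n) - c\<bar> < e / 2"
    using mean[unfolded tendsto_iff dist_real_def, rule_format, of "e / 2"] e by simp
  with f show "\<forall>\<^sub>F n in F. prob_space.prob (M n) {\<omega> \<in> space (M n). \<bar>f n \<omega> - c\<bar> > e}
      \<le> prob_space.variance (M n) (f n) / (e / 2)\<^sup>2"
  proof eventually_elim
    case (elim n)
    interpret prob_space "M n"
      by (rule M)
    have [measurable]: "f n \<in> borel_measurable (M n)"
      using elim by simp
    have "e / 2 \<le> \<bar>f n \<omega> - expectation (f n)\<bar>" if "e < \<bar>f n \<omega> - c\<bar>" for \<omega>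
      using that elim(2) abs_triangle_ineq[of "f n \<omega> - expectation (f n)" "expectation (f n) - c"]
      by simp
    then have "{\<omega> \<in> space (M n). \<bar>f n \<omega> - c\<bar> > e} \<subseteq> {\<omega> \<in> space (M n). e / 2 \<le> \<bar>f n \<omega> - expectation (f n)\<bar>}"
      by auto
    then have "prob {\<omega> \<in> space (M n). \<bar>f n \<omega> - c\<bar> > e}
        \<le> prob {\<omega> \<in> space (M n). e / 2 \<le> \<bar>f n \<omega> - expectation (f n)\<bar>}"
      by (intro finite_measure_mono) measurable
    also have "\<dots> \<le> variance (f n) / (e / 2)\<^sup>2"
      using Chebyshev_inequality[of "f n" "e / 2"] elim e by simp
    finally show ?case .
  qed
qed

lemma tendsto_along_uniform_range:
  fixes R :: "'n \<Rightarrow> real \<Rightarrow> real" and g u :: "'n \<Rightarrow> real"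
  assumes uniform: "\<forall>e>0. \<forall>\<^sub>F n in F. \<forall>y. 0 \<le> y \<and> y < g n \<longrightarrow> \<bar>R n y - c\<bar> \<le> e"
    and u: "\<forall>\<^sub>F n in F. 0 \<le> u n \<and> u n < g n"
  shows "((\<lambda>n. R n (u n)) \<longlongrightarrow> c) F"
  unfolding tendsto_iff dist_real_def
proof (intro allI impI)
  fix e :: real
  assume "e > 0"
  then have "\<forall>\<^sub>F n in F. \<forall>y. 0 \<le> y \<and> y < g n \<longrightarrow> \<bar>R n y - c\<bar> \<le> e / 2"
    using uniform[rule_format, of "e / 2"] by simp
  with u show "\<forall>\<^sub>F n in F. \<bar>R n (u n) - c\<bar> < e"
    by eventually_elim (use \<open>e > 0\<close> in force)
qed

lemma tendsto_expected_exceedances: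
  fixes P :: "'n \<Rightarrow> real \<Rightarrow> real" and gamma :: "'n \<Rightarrow> real" and p k :: "'n \<Rightarrow> nat"
  assumes moderate: "\<forall>e>0. \<forall>\<^sub>F n in F. \<forall>y. 0 \<le> y \<and> y < gamma n \<longrightarrow> \<bar>P n y / Phi_bar y - 1\<bar> \<le> e"
    and gamma_lim: "filterlim gamma at_top F"
    and pk_lim: "filterlim (\<lambda>n. real (p n) / real (k n)) at_top F"
    and pk_bound: "\<And>n. real (p n) / real (k n) < exp ((gamma n)\<^sup>2 / 2)"
  shows "((\<lambda>n. real (p n) / real (k n) * P n (d_const (p n div k n) + x / d_const (p n div k n)))
      \<longlongrightarrow> exp (- x)) F"
proof -
  define pk m u where "pk n = real (p n) / real (k n)" and "m n = real (p n div k n)"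
    and "u n = d_const_real (m n) + x / d_const_real (m n)" for n
  have m_lim: "filterlim m at_top F"
    unfolding m_def using pk_lim by (rule filterlim_real_nat_div)
  have "\<forall>\<^sub>F r in at_top. 1 < r \<and> 2 \<le> d_const_real r + x / d_const_real r
      \<and> (\<forall>g\<ge>0. r < exp (g\<^sup>2 / 2) \<longrightarrow> d_const_real r + x / d_const_real r < g)"
    using eventually_gt_at_top[of 1] eventually_d_const_real_shift_bounds
    by eventually_elim blast
  from eventually_compose_filterlim[OF this m_lim]
    and gamma_lim[unfolded filterlim_at_top, rule_format, of 0]
  have ev: "\<forall>\<^sub>F n in F. 1 < m n \<and> 2 \<le> u n \<and> u n < gamma n"
  proof eventually_elim
    case (elim n)
    have "m n < exp ((gamma n)\<^sup>2 / 2)"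
      unfolding m_def by (rule order.strict_trans1[OF of_nat_div_le_of_nat pk_bound])
    then show ?case
      using elim by (simp add: u_def)
  qed
  have "((\<lambda>n. pk n / m n * (m n * Phi_bar (u n)) * (P n (u n) / Phi_bar (u n))) \<longlongrightarrow> 1 * exp (- x) * 1) F"
  proof (intro tendsto_mult)
    show "((\<lambda>n. pk n / m n) \<longlongrightarrow> 1) F"
      unfolding pk_def m_def using pk_lim by (rule tendsto_ratio_real_nat_div)
    show "((\<lambda>n. m n * Phi_bar (u n)) \<longlongrightarrow> exp (- x)) F"
      unfolding u_def using tendsto_mult_Phi_bar_shift m_lim by (rule filterlim_compose)
    show "((\<lambda>n. P n (u n) / Phi_bar (u n)) \<longlongrightarrow> 1) F"
      using moderate by (rule tendsto_along_uniform_range) (use ev in \<open>auto elim: eventually_mono\<close>)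
  qed
  moreover have "\<forall>\<^sub>F n in F. pk n / m n * (m n * Phi_bar (u n)) * (P n (u n) / Phi_bar (u n)) = pk n * P n (u n)"
    using ev by eventually_elim (simp add: Phi_bar_pos less_imp_neq[symmetric])
  ultimately show ?thesis
    unfolding pk_def u_def m_def d_const_eq by (auto intro: Lim_transform_eventually)
qed

theorem mainTheorem10:
  fixes M :: "'a measure" and X :: "nat \<Rightarrow> 'a \<Rightarrow> real"
    and Mn :: "nat \<Rightarrow> 'b measure" and Y :: "nat \<Rightarrow> nat \<Rightarrow> 'b \<Rightarrow> real"
    and S :: "nat \<Rightarrow> 'a \<Rightarrow> real"
    and gamma :: "nat \<Rightarrow> real" and k p :: "nat \<Rightarrow> nat"
  assumes M: "prob_space M"
    and X_indep: "prob_space.indep_vars M (\<lambda>_. borel) X UNIV"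
    and X_ident: "\<And>i. distr M borel (X i) = distr M borel (X 0)"
    and X_sq_int: "integrable M (\<lambda>\<omega>. (X 0 \<omega>)\<^sup>2)"
    and X_mean: "prob_space.expectation M (X 0) = 0"
    and X_var: "prob_space.variance M (X 0) = 1"
    and S_def: "\<And>n \<omega>. S n \<omega> = (\<Sum>i<n. X i \<omega>)"
    and Mn: "\<And>n. prob_space (Mn n)"
    and Y_indep: "\<And>n. prob_space.indep_vars (Mn n) (\<lambda>_. borel) (Y n) UNIV"
    and Y_distr: "\<And>n i. distr (Mn n) borel (Y n i) = distr M borel (S n)"
    and gamma_lim: "filterlim gamma at_top sequentially"
    and moderate: "\<forall>\<epsilon>>0. \<forall>\<^sub>F n in sequentially. \<forall>x. 0 \<le> x \<and> x < gamma n \<longrightarrow>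
          \<bar>prob_space.prob M {\<omega> \<in> space M. S n \<omega> / sqrt (real n) > x} / Phi_bar x - 1\<bar> \<le> \<epsilon>"
    and k_lim: "filterlim k at_top sequentially"
    and p_lim: "filterlim p at_top sequentially"
    and pk_lim: "filterlim (\<lambda>n. real (p n) / real (k n)) at_top sequentially"
    and pk_bound: "\<And>n. real (p n) / real (k n) < exp ((gamma n)\<^sup>2 / 2)"
  shows "\<forall>x::real.
      ((\<lambda>n. prob_space.expectation (Mn n) (N_tail n (k n) (p n) (Y n) x)) \<longlongrightarrow> exp (- x)) sequentially
    \<and> ((\<lambda>n. prob_space.variance (Mn n) (N_tail n (k n) (p n) (Y n) x)) \<longlongrightarrow> 0) sequentially
    \<and> (\<forall>\<epsilon>>0. ((\<lambda>n. prob_space.prob (Mn n)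
           {\<omega> \<in> space (Mn n). \<bar>N_tail n (k n) (p n) (Y n) x \<omega> - exp (- x)\<bar> > \<epsilon>}) \<longlongrightarrow> 0) sequentially)"
proof (intro allI)
  fix x :: real
  interpret M: prob_space M
    by (rule M)
  let ?N = "\<lambda>n. N_tail n (k n) (p n) (Y n) x"
  define q where "q n = M.prob {\<omega> \<in> space M.
      S n \<omega> / sqrt (real n) > d_const (p n div k n) + x / d_const (p n div k n)}" for n
  have S_meas: "S n \<in> borel_measurable M" for n
    using X_indep by (auto simp: S_def[abs_def] M.indep_vars_def intro!: borel_measurable_sum)
  have "\<forall>\<^sub>F n in sequentially. d_const (p n div k n) > 0"
    using eventually_compose_filterlim[OF eventually_d_const_real_pos filterlim_real_nat_div[OF pk_lim]]
    by (simp add: d_const_eq)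
  then have moments: "\<forall>\<^sub>F n in sequentially.
      prob_space.expectation (Mn n) (?N n) = real (p n) / real (k n) * q n
    \<and> prob_space.variance (Mn n) (?N n) = real (p n) / real (k n) * q n * ((1 - q n) / real (k n))
    \<and> ?N n \<in> borel_measurable (Mn n) \<and> integrable (Mn n) (\<lambda>\<omega>. (?N n \<omega>)\<^sup>2)"
  proof eventually_elim
    case (elim n)
    from N_tail_moments[OF Mn Y_indep Y_distr S_meas elim, where x = x] show ?case
      by (simp add: q_def power2_eq_square)
  qed
  have mean_lim: "((\<lambda>n. real (p n) / real (k n) * q n) \<longlongrightarrow> exp (- x)) sequentially"
    unfolding q_def using moderate gamma_lim pk_lim pk_bound by (rule tendsto_expected_exceedances)
  have "((\<lambda>n. (1 - q n) / real (k n)) \<longlongrightarrow> 0) sequentially"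
  proof (rule tendsto_sandwich[OF _ _ tendsto_const])
    show "((\<lambda>n. 1 / real (k n)) \<longlongrightarrow> 0) sequentially"
      using tendsto_inverse_0_at_top[OF filterlim_compose[OF filterlim_real_sequentially k_lim]]
      by (simp add: inverse_eq_divide)
  qed (auto simp: q_def divide_right_mono)
  from tendsto_mult[OF mean_lim this]
  have var_lim: "((\<lambda>n. real (p n) / real (k n) * q n * ((1 - q n) / real (k n))) \<longlongrightarrow> 0) sequentially"
    by simp
  have E: "((\<lambda>n. prob_space.expectation (Mn n) (?N n)) \<longlongrightarrow> exp (- x)) sequentially"
    by (rule Lim_transform_eventually[OF mean_lim]) (use moments in \<open>auto elim: eventually_mono\<close>)
  have V: "((\<lambda>n. prob_space.variance (Mn n) (?N n)) \<longlongrightarrow> 0) sequentially"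
    by (rule Lim_transform_eventually[OF var_lim]) (use moments in \<open>auto elim: eventually_mono\<close>)
  have "\<forall>\<^sub>F n in sequentially. ?N n \<in> borel_measurable (Mn n) \<and> integrable (Mn n) (\<lambda>\<omega>. (?N n \<omega>)\<^sup>2)"
    using moments by (auto elim: eventually_mono)
  from tendsto_prob_deviation_0[where M = Mn, OF Mn this E V]
  show "((\<lambda>n. prob_space.expectation (Mn n) (?N n)) \<longlongrightarrow> exp (- x)) sequentially
    \<and> ((\<lambda>n. prob_space.variance (Mn n) (?N n)) \<longlongrightarrow> 0) sequentially
    \<and> (\<forall>\<epsilon>>0. ((\<lambda>n. prob_space.prob (Mn n)
          {\<omega> \<in> space (Mn n). \<bar>?N n \<omega> - exp (- x)\<bar> > \<epsilon>}) \<longlongrightarrow> 0) sequentially)"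
    using E V by blast
qed

end
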